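(* Let $m,d,k\ge1$ be integers. If the hypergrid $\mathcal{H}_{m,d}$ has a Steiner $k$-TC-spanner $H$, then it also has a (non-Steiner) $k$-TC-spanner with at most as many edges as $H$.
   Context: $\mathcal{H}_{m,d}$ is the directed graph on $[m]^d$ with an edge $(x,y)$ whenever $y$ and $x$ differ in exactly one coordinate $i$ with $y_i-x_i=1$. For a directed graph $G=(V,E)$, a $k$-TC-spanner is a graph $H=(V,E_H)$ with $E_H$ contained in the transitive closure of $G$ such that whenever $v$ is reachable from $u$ in $G$, $H$ has a path from $u$ to $v$ of length at most $k$. A Steiner $k$-TC-spanner is a directed graph $H=(V_H,E_H)$ with $V\subseteq V_H$ such that for all $u,v\in V$: if $v$ is reachable from $u$ in $G$ then $H$ has a path from $u$ to $v$ of length at most $k$, and otherwise $v$ is not reachable from $u$ in $H$. *)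

theory Defs
  imports Main "HOL-Library.Equipollence"
begin

definition hgrid_vertices :: "nat \<Rightarrow> nat \<Rightarrow> nat list set" where
  "hgrid_vertices m d = {x. length x = d \<and> set x \<subseteq> {1..m}}"

definition hgrid_edges :: "nat \<Rightarrow> nat \<Rightarrow> (nat list \<times> nat list) set" where
  "hgrid_edges m d = {(x, y). x \<in> hgrid_vertices m d \<and> y \<in> hgrid_vertices m d \<and>
      (\<exists>i<d. y ! i = x ! i + 1 \<and> (\<forall>j<d. j \<noteq> i \<longrightarrow> y ! j = x ! j))}"

definition is_TC_spanner :: "'a set \<Rightarrow> ('a \<times> 'a) set \<Rightarrow> nat \<Rightarrow> ('a \<times> 'a) set \<Rightarrow> bool" where
  "is_TC_spanner V E k EH \<longleftrightarrow>
     EH \<subseteq> E\<^sup>+ \<and>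
     (\<forall>u\<in>V. \<forall>v\<in>V. (u, v) \<in> E\<^sup>* \<longrightarrow> (\<exists>j\<le>k. (u, v) \<in> EH ^^ j))"

text \<open>A Steiner k-TC-spanner of (V,E): a digraph on a vertex type containing V (embedded via Inl;
  the Inr vertices are the Steiner vertices) such that reachable pairs of V are joined by paths of
  length at most k and non-reachable pairs of V remain non-reachable.\<close>
definition is_Steiner_TC_spanner ::
  "'a set \<Rightarrow> ('a \<times> 'a) set \<Rightarrow> nat \<Rightarrow> (('a + 'b) \<times> ('a + 'b)) set \<Rightarrow> bool" where
  "is_Steiner_TC_spanner V E k EH \<longleftrightarrow>
     (\<forall>u\<in>V. \<forall>v\<in>V.
        ((u, v) \<in> E\<^sup>* \<longrightarrow> (\<exists>j\<le>k. (Inl u, Inl v) \<in> EH ^^ j)) \<and>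
        ((u, v) \<notin> E\<^sup>* \<longrightarrow> (Inl u, Inl v) \<notin> EH\<^sup>*))"

end

theory Submission
  imports Defs
begin

text \<open>Reachability in the hypergrid is the coordinatewise order, and every nonempty set of grid
  points has a least upper bound in it (the coordinatewise maximum). In any digraph whose
  reachability order on V has such joins, a Steiner spanner H can be contracted onto V: send each
  vertex a of H to the join \<phi> a of the original vertices that reach a in H. Since H preserves
  non-reachability, \<phi> fixes every original vertex; an H-edge (a, b) has \<phi> a below \<phi> b, so it
  becomes an edge of the transitive closure or collapses; hence every path of H shrinks to a path
  between the images of its ends that is no longer, and the new graph has at most as many edges
  as H.\<close>

definition reach_lub :: "('a \<times> 'a) set \<Rightarrow> 'a set \<Rightarrow> 'a set \<Rightarrow> 'a \<Rightarrow> bool" where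
  "reach_lub E V A s \<longleftrightarrow> s \<in> V \<and> (\<forall>u\<in>A. (u, s) \<in> E\<^sup>*) \<and>
     (\<forall>w\<in>V. (\<forall>u\<in>A. (u, w) \<in> E\<^sup>*) \<longrightarrow> (s, w) \<in> E\<^sup>*)"

locale join_digraph =
  fixes V :: "'a set" and E :: "('a \<times> 'a) set"
  assumes reach_antisym: "\<And>u v. u \<in> V \<Longrightarrow> v \<in> V \<Longrightarrow> (u, v) \<in> E\<^sup>* \<Longrightarrow> (v, u) \<in> E\<^sup>* \<Longrightarrow> u = v"
    and reach_lub_exists: "\<And>A. A \<subseteq> V \<Longrightarrow> A \<noteq> {} \<Longrightarrow> \<exists>s. reach_lub E V A s"
begin

definition reach_join :: "'a set \<Rightarrow> 'a" where
  "reach_join A = (SOME s. reach_lub E V A s)"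

lemma reach_lub_reach_join:
  assumes "A \<subseteq> V" "A \<noteq> {}"
  shows "reach_lub E V A (reach_join A)"
  unfolding reach_join_def using reach_lub_exists[OF assms] by (rule someI_ex)

lemma reach_join_mono:
  assumes "B \<subseteq> V" "A \<subseteq> B" "A \<noteq> {}"
  shows "(reach_join A, reach_join B) \<in> E\<^sup>*"
proof -
  have "A \<subseteq> V" "B \<noteq> {}" using assms by auto
  with assms show ?thesis
    using reach_lub_reach_join[of A] reach_lub_reach_join[of B] unfolding reach_lub_def
    by (meson subsetD)
qed

lemma reach_join_eq_greatest:
  assumes "A \<subseteq> V" "x \<in> A" "\<And>u. u \<in> A \<Longrightarrow> (u, x) \<in> E\<^sup>*"
  shows "reach_join A = x"
proof -
  have "reach_lub E V A (reach_join A)" using assms by (intro reach_lub_reach_join) auto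
  then show ?thesis using assms unfolding reach_lub_def by (intro reach_antisym) auto
qed

context
  fixes EH :: "(('a + 'b) \<times> ('a + 'b)) set"
begin

definition Steiner_sources :: "'a + 'b \<Rightarrow> 'a set" where
  "Steiner_sources a = {u \<in> V. (Inl u, a) \<in> EH\<^sup>*}"

definition Steiner_contract :: "'a + 'b \<Rightarrow> 'a" where
  "Steiner_contract a = reach_join (Steiner_sources a)"

definition contracted_edges :: "('a \<times> 'a) set" where
  "contracted_edges = {(Steiner_contract a, Steiner_contract b) | a b.
     (a, b) \<in> EH \<and> Steiner_sources a \<noteq> {} \<and> Steiner_contract a \<noteq> Steiner_contract b}"

lemma Steiner_sources_mono: "(a, b) \<in> EH\<^sup>* \<Longrightarrow> Steiner_sources a \<subseteq> Steiner_sources b"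
  unfolding Steiner_sources_def by (auto intro: rtrancl_trans)

lemma Steiner_contract_reach:
  assumes "(a, b) \<in> EH\<^sup>*" "Steiner_sources a \<noteq> {}"
  shows "(Steiner_contract a, Steiner_contract b) \<in> E\<^sup>*"
  unfolding Steiner_contract_def using assms Steiner_sources_mono
  by (intro reach_join_mono) (auto simp: Steiner_sources_def)

lemma contracted_edges_subset_trancl: "contracted_edges \<subseteq> E\<^sup>+"
  unfolding contracted_edges_def using Steiner_contract_reach
  by (auto simp: rtrancl_eq_or_trancl)

lemma contracted_edges_lepoll: "contracted_edges \<lesssim> EH"
  by (rule subset_image_lepoll[where f = "map_prod Steiner_contract Steiner_contract"])
    (force simp: contracted_edges_def)

lemma contracted_path:
  assumes "(a, b) \<in> EH ^^ j" "Steiner_sources a \<noteq> {}"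
  shows "\<exists>j'\<le>j. (Steiner_contract a, Steiner_contract b) \<in> contracted_edges ^^ j'"
  using assms(1)
proof (induction j arbitrary: b)
  case 0
  then show ?case by auto
next
  case (Suc j)
  then obtain c where ac: "(a, c) \<in> EH ^^ j" and cb: "(c, b) \<in> EH" by auto
  obtain j' where "j' \<le> j" and j': "(Steiner_contract a, Steiner_contract c) \<in> contracted_edges ^^ j'"
    using Suc.IH[OF ac] by blast
  have "Steiner_sources c \<noteq> {}"
    using Steiner_sources_mono[OF relpow_imp_rtrancl[OF ac]] assms(2) by blast
  show ?case
  proof (cases "Steiner_contract c = Steiner_contract b")
    case True
    then show ?thesis using \<open>j' \<le> j\<close> j' by (intro exI[of _ j']) auto
  next
    case False
    with cb \<open>Steiner_sources c \<noteq> {}\<close> have "(Steiner_contract c, Steiner_contract b) \<in> contracted_edges"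
      unfolding contracted_edges_def by blast
    with j' \<open>j' \<le> j\<close> show ?thesis by (intro exI[of _ "Suc j'"]) auto
  qed
qed

lemma Steiner_contract_Inl:
  assumes "is_Steiner_TC_spanner V E k EH" "x \<in> V"
  shows "Steiner_contract (Inl x) = x"
  unfolding Steiner_contract_def
proof (rule reach_join_eq_greatest)
  fix u assume "u \<in> Steiner_sources (Inl x)"
  then show "(u, x) \<in> E\<^sup>*"
    using assms unfolding Steiner_sources_def is_Steiner_TC_spanner_def by blast
qed (use assms(2) in \<open>auto simp: Steiner_sources_def\<close>)

theorem TC_spanner_of_Steiner_TC_spanner:
  assumes "is_Steiner_TC_spanner V E k EH"
  shows "is_TC_spanner V E k contracted_edges"
  unfolding is_TC_spanner_def
proof (intro conjI contracted_edges_subset_trancl ballI impI)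
  fix u v assume "u \<in> V" "v \<in> V" "(u, v) \<in> E\<^sup>*"
  then obtain j where "j \<le> k" "(Inl u, Inl v) \<in> EH ^^ j"
    using assms unfolding is_Steiner_TC_spanner_def by blast
  moreover have "Steiner_sources (Inl u) \<noteq> {}"
    using \<open>u \<in> V\<close> unfolding Steiner_sources_def by auto
  ultimately obtain j' where "j' \<le> k"
    "(Steiner_contract (Inl u), Steiner_contract (Inl v)) \<in> contracted_edges ^^ j'"
    using contracted_path by (meson order_trans)
  then show "\<exists>j\<le>k. (u, v) \<in> contracted_edges ^^ j"
    using Steiner_contract_Inl[OF assms] \<open>u \<in> V\<close> \<open>v \<in> V\<close> by auto
qed

end

end

lemma hgrid_vertices_finite: "finite (hgrid_vertices m d)"
proof -
  have "hgrid_vertices m d = {xs. set xs \<subseteq> {1..m} \<and> length xs = d}"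
    unfolding hgrid_vertices_def by auto
  then show ?thesis by (simp add: finite_lists_length_eq)
qed

lemma hgrid_rtrancl_imp_le:
  "(u, v) \<in> (hgrid_edges m d)\<^sup>* \<Longrightarrow> i < d \<Longrightarrow> u ! i \<le> v ! i"
proof (induction rule: rtrancl_induct)
  case base
  then show ?case by simp
next
  case (step y z)
  from step(2) obtain l where "z ! l = y ! l + 1" "\<forall>j<d. j \<noteq> l \<longrightarrow> z ! j = y ! j"
    unfolding hgrid_edges_def by auto
  then have "y ! i \<le> z ! i" using step(4) by (cases "i = l") auto
  with step show ?case by simp
qed

lemma hgrid_le_imp_rtrancl:
  assumes "u \<in> hgrid_vertices m d" "v \<in> hgrid_vertices m d" "\<forall>i<d. u ! i \<le> v ! i"
  shows "(u, v) \<in> (hgrid_edges m d)\<^sup>*"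
  using assms
proof (induction "\<Sum>i<d. v ! i - u ! i" arbitrary: u rule: less_induct)
  case less
  have lens: "length u = d" "length v = d" and entries: "set u \<subseteq> {1..m}" "set v \<subseteq> {1..m}"
    using less.prems unfolding hgrid_vertices_def by auto
  show ?case
  proof (cases "\<forall>i<d. u ! i = v ! i")
    case True
    then have "u = v" using lens by (auto intro: nth_equalityI)
    then show ?thesis by simp
  next
    case False
    then obtain l where l: "l < d" "u ! l < v ! l"
      using less.prems(3) le_neq_implies_less by blast
    define u' where "u' = u[l := u ! l + 1]"
    have "v ! l \<le> m" using lens entries l by (metis atLeastAtMost_iff nth_mem subsetD)
    then have u'V: "u' \<in> hgrid_vertices m d"
      unfolding hgrid_vertices_def u'_def using lens entries l
      by (auto dest!: set_update_subset_insert[THEN subsetD])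
    have "(u, u') \<in> hgrid_edges m d"
      unfolding hgrid_edges_def using u'V less.prems(1) l lens by (auto simp: u'_def)
    moreover have "(\<Sum>i<d. v ! i - u' ! i) < (\<Sum>i<d. v ! i - u ! i)"
    proof (rule sum_strict_mono_ex1)
      show "\<forall>i\<in>{..<d}. v ! i - u' ! i \<le> v ! i - u ! i"
        using lens l by (auto simp: u'_def nth_list_update)
      show "\<exists>i\<in>{..<d}. v ! i - u' ! i < v ! i - u ! i"
        using l lens by (intro bexI[of _ l]) (auto simp: u'_def)
    qed simp
    moreover have "\<forall>i<d. u' ! i \<le> v ! i"
      using less.prems(3) l lens by (auto simp: u'_def nth_list_update)
    ultimately show ?thesis
      using less.hyps u'V less.prems(2) by (meson converse_rtrancl_into_rtrancl)
  qed
qed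

lemma hgrid_rtrancl_iff:
  assumes "u \<in> hgrid_vertices m d" "v \<in> hgrid_vertices m d"
  shows "(u, v) \<in> (hgrid_edges m d)\<^sup>* \<longleftrightarrow> (\<forall>i<d. u ! i \<le> v ! i)"
  using assms hgrid_rtrancl_imp_le hgrid_le_imp_rtrancl by blast

definition coordinatewise_Max :: "nat \<Rightarrow> nat list set \<Rightarrow> nat list" where
  "coordinatewise_Max d A = map (\<lambda>i. Max ((\<lambda>u. u ! i) ` A)) [0..<d]"

lemma coordinatewise_Max_in_hgrid_vertices:
  assumes "A \<subseteq> hgrid_vertices m d" "A \<noteq> {}"
  shows "coordinatewise_Max d A \<in> hgrid_vertices m d"
proof -
  have fin: "finite A" using assms(1) hgrid_vertices_finite finite_subset by blast
  have "Max ((\<lambda>u. u ! i) ` A) \<in> {1..m}" if "i < d" for i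
  proof -
    have "Max ((\<lambda>u. u ! i) ` A) \<in> (\<lambda>u. u ! i) ` A"
      using fin assms(2) by (intro Max_in) auto
    then obtain u where "u \<in> A" "Max ((\<lambda>u. u ! i) ` A) = u ! i" by auto
    moreover have "u ! i \<in> set u" "set u \<subseteq> {1..m}"
      using \<open>u \<in> A\<close> assms(1) that unfolding hgrid_vertices_def by auto
    ultimately show ?thesis by auto
  qed
  then show ?thesis unfolding hgrid_vertices_def coordinatewise_Max_def by auto
qed

lemma reach_lub_coordinatewise_Max:
  assumes A: "A \<subseteq> hgrid_vertices m d" "A \<noteq> {}"
  shows "reach_lub (hgrid_edges m d) (hgrid_vertices m d) A (coordinatewise_Max d A)"
  unfolding reach_lub_def
proof (intro conjI ballI impI)
  have fin: "finite A" using A(1) hgrid_vertices_finite finite_subset by blast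
  have nth: "coordinatewise_Max d A ! i = Max ((\<lambda>u. u ! i) ` A)" if "i < d" for i
    using that by (simp add: coordinatewise_Max_def)
  show V: "coordinatewise_Max d A \<in> hgrid_vertices m d"
    using A by (rule coordinatewise_Max_in_hgrid_vertices)
  show "(u, coordinatewise_Max d A) \<in> (hgrid_edges m d)\<^sup>*" if "u \<in> A" for u
    using that A(1) V fin by (subst hgrid_rtrancl_iff) (auto simp: nth)
  show "(coordinatewise_Max d A, w) \<in> (hgrid_edges m d)\<^sup>*"
    if "w \<in> hgrid_vertices m d" "\<forall>u\<in>A. (u, w) \<in> (hgrid_edges m d)\<^sup>*" for w
  proof -
    have "\<forall>u\<in>A. \<forall>i<d. u ! i \<le> w ! i"
      using that A(1) hgrid_rtrancl_imp_le by blast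
    then show ?thesis
      using that(1) V fin A(2) by (subst hgrid_rtrancl_iff) (auto simp: nth)
  qed
qed

lemma join_digraph_hgrid: "join_digraph (hgrid_vertices m d) (hgrid_edges m d)"
proof
  fix u v assume uv: "u \<in> hgrid_vertices m d" "v \<in> hgrid_vertices m d"
    "(u, v) \<in> (hgrid_edges m d)\<^sup>*" "(v, u) \<in> (hgrid_edges m d)\<^sup>*"
  then have "u ! i = v ! i" if "i < d" for i
    using hgrid_rtrancl_imp_le that by (meson order.antisym)
  with uv(1,2) show "u = v" unfolding hgrid_vertices_def by (auto intro: nth_equalityI)
next
  fix A assume "A \<subseteq> hgrid_vertices m d" "A \<noteq> {}"
  then show "\<exists>s. reach_lub (hgrid_edges m d) (hgrid_vertices m d) A s"
    by (blast intro: reach_lub_coordinatewise_Max)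
qed

theorem corollary2:
  fixes m d k :: nat and EH :: "((nat list + 'b) \<times> (nat list + 'b)) set"
  assumes "m \<ge> 1" and "d \<ge> 1" and "k \<ge> 1"
    and "is_Steiner_TC_spanner (hgrid_vertices m d) (hgrid_edges m d) k EH"
  shows "\<exists>EH'. is_TC_spanner (hgrid_vertices m d) (hgrid_edges m d) k EH' \<and> EH' \<lesssim> EH"
proof -
  interpret join_digraph "hgrid_vertices m d" "hgrid_edges m d"
    by (rule join_digraph_hgrid)
  show ?thesis
    using TC_spanner_of_Steiner_TC_spanner[OF assms(4)] contracted_edges_lepoll by blast
qed

end
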